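(* In an operational theory, let $\mathcal{M}_1,\mathcal{M}_2,\mathcal{M}_3$ be binary-outcome measurements (outcomes $X_i\in\{0,1\}$) that are pairwise jointly measurable, with joint measurements $\mathcal{M}_{ij}$ ($i<j$), and suppose there is a preparation $\mathcal{P}_*$ such that for all $i\neq j$, $p(X_i=0,X_j=1|\mathcal{M}_{ij};\mathcal{P}_* )=p(X_i=1,X_j=0|\mathcal{M}_{ij};\mathcal{P}_* )=\tfrac12$. Then $\mathcal{M}_1,\mathcal{M}_2,\mathcal{M}_3$ are not (triplewise) jointly measurable.
   Context: An operational theory assigns outcome probabilities $p(X|M;P)$ to preparation and measurement procedures; measurements $\mathcal{M}$ are equivalence classes of measurement procedures giving identical statistics for all preparations. A set of measurements $\{\mathcal{M}_1,\dots,\mathcal{M}_N\}$ is jointly measurable if there exists a measurement $\mathcal{M}$ whose outcome set is the Cartesian product of the outcome sets of the $\mathcal{M}_k$ and such that, for every preparation and every subset $S$ of the indices, the outcome distribution of the joint measurement of $\{\mathcal{M}_s:s\in S\}$ (in particular of each single $\mathcal{M}_s$) is the corresponding marginal of the outcome distribution of $\mathcal{M}$. A set is pairwise jointly measurable if every two-element subset is jointly measurable. *)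

theory Defs
  imports "HOL-Probability.Probability_Mass_Function"
begin

text \<open>Outcomes: atomic values or tuples (elements of Cartesian products of outcome sets).\<close>
datatype 'a outcome = Val 'a | Tup "'a outcome list"

text \<open>A measurement (equivalence class of measurement procedures) is represented by its
  outcome set together with its statistics: for every preparation, a distribution over outcomes,
  i.e. p(X|M;P) = pmf (stat M P) X.\<close>
type_synonym ('a, 'p) meas = "'a outcome set \<times> ('p \<Rightarrow> 'a outcome pmf)"

definition outcomes :: "('a, 'p) meas \<Rightarrow> 'a outcome set" where
  "outcomes M = fst M"

definition stat :: "('a, 'p) meas \<Rightarrow> 'p \<Rightarrow> 'a outcome pmf" where
  "stat M = snd M"

text \<open>An operational theory: a set T of realizable measurements (preparations are the
  elements of type 'p); each outcome distribution is supported on the outcome set.\<close>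
definition operational_theory :: "('a, 'p) meas set \<Rightarrow> bool" where
  "operational_theory T \<longleftrightarrow> (\<forall>M\<in>T. \<forall>P. set_pmf (stat M P) \<subseteq> outcomes M)"

fun component :: "nat \<Rightarrow> 'a outcome \<Rightarrow> 'a outcome" where
  "component i (Tup xs) = xs ! i"
| "component i (Val a) = Val a"

fun proj :: "nat list \<Rightarrow> 'a outcome \<Rightarrow> 'a outcome" where
  "proj S (Tup xs) = Tup (map ((!) xs) S)"
| "proj S (Val a) = Val a"

text \<open>M is a joint measurement (in T) of the family Ms, where J S is the given joint
  measurement of the subfamily indexed by the (increasing) index list S, for proper
  subfamilies with at least two members.\<close>
definition joint_meas_of ::
  "('a, 'p) meas set \<Rightarrow> ('a, 'p) meas list \<Rightarrow> (nat list \<Rightarrow> ('a, 'p) meas) \<Rightarrow> ('a, 'p) meas \<Rightarrow> bool" where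
  "joint_meas_of T Ms J M \<longleftrightarrow>
     M \<in> T \<and>
     outcomes M = Tup ` listset (map outcomes Ms) \<and>
     (\<forall>P i. i < length Ms \<longrightarrow> map_pmf (component i) (stat M P) = stat (Ms ! i) P) \<and>
     (\<forall>P S. sorted_wrt (<) S \<and> set S \<subseteq> {..<length Ms} \<and> 2 \<le> length S \<and> length S < length Ms
        \<longrightarrow> map_pmf (proj S) (stat M P) = stat (J S) P)"

definition jointly_measurable ::
  "('a, 'p) meas set \<Rightarrow> ('a, 'p) meas list \<Rightarrow> (nat list \<Rightarrow> ('a, 'p) meas) \<Rightarrow> bool" where
  "jointly_measurable T Ms J \<longleftrightarrow> (\<exists>M. joint_meas_of T Ms J M)"

end

theory Submission
  imports Defs
begin

text \<open>Every pairwise marginal at \<open>P\<^sub>*\<close> is supported on the two anticorrelated outcomes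
  \<open>(0,1)\<close> and \<open>(1,0)\<close>. A triple joint measurement would have some outcome \<open>(a,b,c)\<close> of
  positive probability, and each of its pairwise projections would then be anticorrelated,
  i.e. \<open>a,b,c\<close> would be pairwise distinct bits, which is impossible.\<close>

lemma set_pmf_subset_two_points:
  fixes p :: "'a pmf"
  assumes "a \<noteq> b" and "pmf p a + pmf p b = 1"
  shows "set_pmf p \<subseteq> {a, b}"
proof -
  have "measure_pmf.prob p {a, b} = 1"
    using assms by (simp add: measure_measure_pmf_finite)
  then have "AE x in measure_pmf p. x \<in> {a, b}"
    by (subst (asm) measure_pmf.prob_eq_1) auto
  then show ?thesis
    by (auto simp: AE_measure_pmf_iff)
qed

lemma three_in_two_points_not_distinct:
  assumes "a \<in> {u, v}" and "b \<in> {u, v}" and "c \<in> {u, v}"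
  shows "a = b \<or> a = c \<or> b = c"
  using assms by auto

lemma Tup_listset3_cases:
  assumes "x \<in> Tup ` listset [A, B, C]"
  obtains a b c where "x = Tup [a, b, c]" and "a \<in> A" and "b \<in> B" and "c \<in> C"
  using assms by (auto simp: set_Cons_def)

lemma set_pmf_joint_meas_subset:
  assumes "operational_theory T" and "joint_meas_of T Ms J M"
  shows "set_pmf (stat M P) \<subseteq> Tup ` listset (map outcomes Ms)"
  using assms unfolding operational_theory_def joint_meas_of_def by blast

lemma proj_in_set_pmf_joint_meas_marginal:
  assumes "joint_meas_of T Ms J M" and "x \<in> set_pmf (stat M P)"
    and "sorted_wrt (<) S" and "set S \<subseteq> {..<length Ms}" and "2 \<le> length S"
    and "length S < length Ms"
  shows "proj S x \<in> set_pmf (stat (J S) P)"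
proof -
  have "map_pmf (proj S) (stat M P) = stat (J S) P"
    using assms unfolding joint_meas_of_def by blast
  then show ?thesis
    using assms(2) by (metis pmf.set_map imageI)
qed

theorem corollary1:
  fixes T :: "(nat, 'p) meas set"
    and M1 M2 M3 M12 M13 M23 :: "(nat, 'p) meas"
    and Pstar :: 'p
  assumes "operational_theory T"
    and "M1 \<in> T" and "M2 \<in> T" and "M3 \<in> T"
    and "outcomes M1 = {Val 0, Val 1}" and "outcomes M2 = {Val 0, Val 1}"
    and "outcomes M3 = {Val 0, Val 1}"
    and "joint_meas_of T [M1, M2] J0 M12"
    and "joint_meas_of T [M1, M3] J0 M13"
    and "joint_meas_of T [M2, M3] J0 M23"
    and "\<forall>Mij \<in> {M12, M13, M23}.
           pmf (stat Mij Pstar) (Tup [Val 0, Val 1]) = 1/2 \<and>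
           pmf (stat Mij Pstar) (Tup [Val 1, Val 0]) = 1/2"
  shows "\<not> jointly_measurable T [M1, M2, M3]
            ((\<lambda>_. undefined)([0, 1] := M12, [0, 2] := M13, [1, 2] := M23))"
proof
  let ?J = "(\<lambda>_. undefined)([0, 1] := M12, [0, 2] := M13, [1, 2] := M23)"
  let ?anti = "{Tup [Val 0, Val 1], Tup [Val 1, Val 0]} :: nat outcome set"
  assume "jointly_measurable T [M1, M2, M3] ?J"
  then obtain M where M: "joint_meas_of T [M1, M2, M3] ?J M"
    unfolding jointly_measurable_def by blast
  obtain x where x: "x \<in> set_pmf (stat M Pstar)"
    using set_pmf_not_empty[of "stat M Pstar"] by blast
  then have "x \<in> Tup ` listset [{Val 0, Val 1}, {Val 0, Val 1}, {Val 0, Val 1}]"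
    using set_pmf_joint_meas_subset[OF assms(1) M] assms(5-7) by auto
  then obtain a b c where abc: "x = Tup [a, b, c]"
      "a \<in> {Val 0, Val 1}" "b \<in> {Val 0, Val 1}" "c \<in> {Val 0, Val 1}"
    by (rule Tup_listset3_cases)
  have anti: "proj S x \<in> ?anti" if S: "S \<in> {[0, 1], [0, 2], [1, 2]}" for S
  proof -
    have "?J S \<in> {M12, M13, M23}"
      using S by auto
    then have "set_pmf (stat (?J S) Pstar) \<subseteq> ?anti"
      using assms(11) by (intro set_pmf_subset_two_points) auto
    moreover have "proj S x \<in> set_pmf (stat (?J S) Pstar)"
      using S by (intro proj_in_set_pmf_joint_meas_marginal[OF M x]) auto
    ultimately show ?thesis
      by blast
  qed
  have "a \<noteq> b" "a \<noteq> c" "b \<noteq> c"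
    using anti[of "[0, 1]"] anti[of "[0, 2]"] anti[of "[1, 2]"] abc by auto
  then show False
    using three_in_two_points_not_distinct[OF abc(2-4)] by blast
qed

end
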